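(* Let $G$ be a multiplicative monoid with identity, let $N$ and $M$ be $G$-graded near-rings and let $P$ be a graded ideal of $N$. Then $P$ is a graded almost prime ideal of $N$ if and only if $P\times M$ is a graded almost prime ideal of $N\times M$.
   Context: A near-ring $(N,+,\cdot)$ is a set with two binary operations such that $(N,+)$ is a group (not necessarily abelian), $(N,\cdot)$ is a semigroup, and $(a+b)y = ay+by$ for all $a,b,y\in N$. For a multiplicative monoid $G$ with identity, $N$ is a $G$-graded near-ring if there is a family $\{N_\sigma\}_{\sigma\in G}$ of additive normal subgroups of $N$ with $N=\bigoplus_{\sigma\in G}N_\sigma$ and $N_\sigma N_\tau\subseteq N_{\sigma\tau}$. $N\times M$ is $G$-graded with components $N_\sigma\times M_\sigma$. An ideal $P$ is graded if $P=\bigoplus_{\sigma}(P\cap N_\sigma)$. For ideals $I,J$, $IJ$ denotes their product and $P^2=PP$; for a graded ideal $P$ of a graded near-ring $R$ the paper writes $P^2\cap R$. A graded ideal $P$ of $R$ is graded almost prime if for all graded ideals $I,J$ of $R$ with $IJ\subseteq P$ and $IJ\not\subseteq P^2\cap R$, either $I\subseteq P$ or $J\subseteq P$. *)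

theory Defs
  imports "HOL-Algebra.Algebra"
begin

text \<open>A near-ring is represented by a HOL-Algebra ring record (the field one is unused).\<close>

definition near_ring :: "('a, 'm) ring_scheme \<Rightarrow> bool" where
  "near_ring R \<longleftrightarrow>
     group (add_monoid R) \<and>
     (\<forall>x\<in>carrier R. \<forall>y\<in>carrier R. x \<otimes>\<^bsub>R\<^esub> y \<in> carrier R) \<and>
     (\<forall>x\<in>carrier R. \<forall>y\<in>carrier R. \<forall>z\<in>carrier R.
        (x \<otimes>\<^bsub>R\<^esub> y) \<otimes>\<^bsub>R\<^esub> z = x \<otimes>\<^bsub>R\<^esub> (y \<otimes>\<^bsub>R\<^esub> z)) \<and>
     (\<forall>a\<in>carrier R. \<forall>b\<in>carrier R. \<forall>y\<in>carrier R.
        (a \<oplus>\<^bsub>R\<^esub> b) \<otimes>\<^bsub>R\<^esub> y = (a \<otimes>\<^bsub>R\<^esub> y) \<oplus>\<^bsub>R\<^esub> (b \<otimes>\<^bsub>R\<^esub> y))"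

text \<open>Ideal of a (right distributive) near-ring (Pilz): a normal subgroup I of (N,+)
  with I N \<subseteq> I and n(n'+i) - n n' \<in> I.\<close>

definition nr_ideal :: "('a, 'm) ring_scheme \<Rightarrow> 'a set \<Rightarrow> bool" where
  "nr_ideal R I \<longleftrightarrow>
     normal I (add_monoid R) \<and>
     (\<forall>i\<in>I. \<forall>n\<in>carrier R. i \<otimes>\<^bsub>R\<^esub> n \<in> I) \<and>
     (\<forall>n\<in>carrier R. \<forall>n'\<in>carrier R. \<forall>i\<in>I.
        (n \<otimes>\<^bsub>R\<^esub> (n' \<oplus>\<^bsub>R\<^esub> i)) \<oplus>\<^bsub>R\<^esub> (inv\<^bsub>add_monoid R\<^esub> (n \<otimes>\<^bsub>R\<^esub> n')) \<in> I)"

text \<open>G-graded near-ring: G a monoid, Ns :: 'g \<Rightarrow> 'a set the homogeneous components,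
  additive normal subgroups forming an internal direct sum, with N_s N_t \<subseteq> N_{st}.\<close>

definition graded_near_ring ::
  "('g, 'n) monoid_scheme \<Rightarrow> ('a, 'm) ring_scheme \<Rightarrow> ('g \<Rightarrow> 'a set) \<Rightarrow> bool" where
  "graded_near_ring G R Ns \<longleftrightarrow>
     monoid G \<and> near_ring R \<and>
     (\<forall>s\<in>carrier G. normal (Ns s) (add_monoid R)) \<and>
     generate (add_monoid R) (\<Union>s\<in>carrier G. Ns s) = carrier R \<and>
     (\<forall>s\<in>carrier G. Ns s \<inter> generate (add_monoid R) (\<Union>t\<in>carrier G - {s}. Ns t)
                      = {\<zero>\<^bsub>R\<^esub>}) \<and>
     (\<forall>s\<in>carrier G. \<forall>t\<in>carrier G. \<forall>x\<in>Ns s. \<forall>y\<in>Ns t.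
        x \<otimes>\<^bsub>R\<^esub> y \<in> Ns (s \<otimes>\<^bsub>G\<^esub> t))"

definition graded_ideal ::
  "('g, 'n) monoid_scheme \<Rightarrow> ('a, 'm) ring_scheme \<Rightarrow> ('g \<Rightarrow> 'a set) \<Rightarrow> 'a set \<Rightarrow> bool" where
  "graded_ideal G R Ns P \<longleftrightarrow>
     nr_ideal R P \<and> generate (add_monoid R) (\<Union>s\<in>carrier G. P \<inter> Ns s) = P"

definition ideal_prod :: "('a, 'm) ring_scheme \<Rightarrow> 'a set \<Rightarrow> 'a set \<Rightarrow> 'a set" where
  "ideal_prod R I J = generate (add_monoid R) {i \<otimes>\<^bsub>R\<^esub> j | i j. i \<in> I \<and> j \<in> J}"

definition graded_almost_prime ::
  "('g, 'n) monoid_scheme \<Rightarrow> ('a, 'm) ring_scheme \<Rightarrow> ('g \<Rightarrow> 'a set) \<Rightarrow> 'a set \<Rightarrow> bool" where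
  "graded_almost_prime G R Ns P \<longleftrightarrow>
     graded_ideal G R Ns P \<and>
     (\<forall>I J. graded_ideal G R Ns I \<longrightarrow> graded_ideal G R Ns J \<longrightarrow>
        ideal_prod R I J \<subseteq> P \<longrightarrow>
        \<not> ideal_prod R I J \<subseteq> ideal_prod R P P \<inter> carrier R \<longrightarrow>
        I \<subseteq> P \<or> J \<subseteq> P)"

definition product_grading :: "('g \<Rightarrow> 'a set) \<Rightarrow> ('g \<Rightarrow> 'b set) \<Rightarrow> 'g \<Rightarrow> ('a \<times> 'b) set" where
  "product_grading Ns Ms s = Ns s \<times> Ms s"

end

theory Submission
  imports Defs
begin

(* The first projection N \<times> M \<rightarrow> N is a surjective near-ring homomorphism that maps
   homogeneous components into homogeneous components, so it carries every graded ideal K of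
   N \<times> M onto a graded ideal fst K of N with K \<subseteq> fst K \<times> M, and it commutes with products of
   ideals. Moreover (I \<times> M)(J \<times> M) = IJ \<times> M\<^sup>2, because 0 \<cdot> 0 = 0 in a near-ring. Hence the
   almost-prime condition for P \<times> M at K, L is the one for P at fst K, fst L, the second
   coordinate of an element of KL lying in M\<^sup>2 anyway. Conversely, P \<times> M is tested at
   I \<times> M and J \<times> M: an element y of IJ outside P\<^sup>2 gives (y, 0) in (I \<times> M)(J \<times> M)
   outside (P \<times> M)\<^sup>2. *)

lemma RDirProd_mult [simp]:
  "(a, b) \<otimes>\<^bsub>RDirProd N M\<^esub> (c, d) = (a \<otimes>\<^bsub>N\<^esub> c, b \<otimes>\<^bsub>M\<^esub> d)"
  by (simp add: RDirProd_def monoid.defs DirProd_def)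

lemma RDirProd_add [simp]:
  "(a, b) \<oplus>\<^bsub>RDirProd N M\<^esub> (c, d) = (a \<oplus>\<^bsub>N\<^esub> c, b \<oplus>\<^bsub>M\<^esub> d)"
  by (simp add: RDirProd_def monoid.defs DirProd_def)

lemma near_ring_add_group: "near_ring R \<Longrightarrow> group (add_monoid R)"
  by (simp add: near_ring_def)

lemma near_ring_mult_closed:
  "near_ring R \<Longrightarrow> x \<in> carrier R \<Longrightarrow> y \<in> carrier R \<Longrightarrow> x \<otimes>\<^bsub>R\<^esub> y \<in> carrier R"
  unfolding near_ring_def by blast

lemma near_ring_zero_closed: "near_ring R \<Longrightarrow> \<zero>\<^bsub>R\<^esub> \<in> carrier R"
  using monoid.one_closed[OF group.is_monoid[OF near_ring_add_group]] by fastforce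

lemma near_ring_zero_mult:
  assumes R: "near_ring R" and y: "y \<in> carrier R"
  shows "\<zero>\<^bsub>R\<^esub> \<otimes>\<^bsub>R\<^esub> y = \<zero>\<^bsub>R\<^esub>"
proof -
  interpret A: group "add_monoid R" by (rule near_ring_add_group[OF R])
  have z: "\<zero>\<^bsub>R\<^esub> \<in> carrier R" by (rule near_ring_zero_closed[OF R])
  have zy: "\<zero>\<^bsub>R\<^esub> \<otimes>\<^bsub>R\<^esub> y \<in> carrier R" by (rule near_ring_mult_closed[OF R z y])
  have "\<zero>\<^bsub>R\<^esub> \<otimes>\<^bsub>R\<^esub> y = (\<zero>\<^bsub>R\<^esub> \<oplus>\<^bsub>R\<^esub> \<zero>\<^bsub>R\<^esub>) \<otimes>\<^bsub>R\<^esub> y"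
    using A.l_one[of "\<zero>\<^bsub>R\<^esub>"] z by simp
  also have "\<dots> = (\<zero>\<^bsub>R\<^esub> \<otimes>\<^bsub>R\<^esub> y) \<oplus>\<^bsub>R\<^esub> (\<zero>\<^bsub>R\<^esub> \<otimes>\<^bsub>R\<^esub> y)"
    using R z y unfolding near_ring_def by blast
  finally show ?thesis using A.l_cancel_one'[of "\<zero>\<^bsub>R\<^esub> \<otimes>\<^bsub>R\<^esub> y"] zy by simp
qed

lemma near_ring_RDirProd:
  assumes N: "near_ring N" and M: "near_ring M"
  shows "near_ring (RDirProd N M)"
  unfolding near_ring_def RDirProd_add_monoid
proof (intro conjI ballI)
  show "group (add_monoid N \<times>\<times> add_monoid M)"
    by (intro DirProd_group near_ring_add_group N M)
  fix x y z
  assume "x \<in> carrier (RDirProd N M)" "y \<in> carrier (RDirProd N M)" "z \<in> carrier (RDirProd N M)"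
  then obtain a b c d e f where xyz: "x = (a, b)" "y = (c, d)" "z = (e, f)"
    and "a \<in> carrier N" "c \<in> carrier N" "e \<in> carrier N"
    and "b \<in> carrier M" "d \<in> carrier M" "f \<in> carrier M"
    by (auto simp: RDirProd_carrier)
  with N M show "x \<otimes>\<^bsub>RDirProd N M\<^esub> y \<in> carrier (RDirProd N M)"
    and "x \<otimes>\<^bsub>RDirProd N M\<^esub> y \<otimes>\<^bsub>RDirProd N M\<^esub> z
      = x \<otimes>\<^bsub>RDirProd N M\<^esub> (y \<otimes>\<^bsub>RDirProd N M\<^esub> z)"
    and "(x \<oplus>\<^bsub>RDirProd N M\<^esub> y) \<otimes>\<^bsub>RDirProd N M\<^esub> z
      = x \<otimes>\<^bsub>RDirProd N M\<^esub> z \<oplus>\<^bsub>RDirProd N M\<^esub> y \<otimes>\<^bsub>RDirProd N M\<^esub> z"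
    unfolding xyz near_ring_def by (simp_all add: RDirProd_carrier)
qed

lemma RDirProd_add_inv:
  assumes "near_ring N" "near_ring M" "a \<in> carrier N" "b \<in> carrier M"
  shows "inv\<^bsub>add_monoid (RDirProd N M)\<^esub> (a, b) = (inv\<^bsub>add_monoid N\<^esub> a, inv\<^bsub>add_monoid M\<^esub> b)"
  unfolding RDirProd_add_monoid
  using assms by (simp add: inv_DirProd near_ring_add_group)

lemma graded_near_ring_near_ring: "graded_near_ring G R Rs \<Longrightarrow> near_ring R"
  by (simp add: graded_near_ring_def)

lemma graded_near_ring_component_subgroup:
  "graded_near_ring G R Rs \<Longrightarrow> s \<in> carrier G \<Longrightarrow> subgroup (Rs s) (add_monoid R)"
  unfolding graded_near_ring_def using normal_imp_subgroup by blast

lemma nr_ideal_subgroup: "nr_ideal R I \<Longrightarrow> subgroup I (add_monoid R)"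
  unfolding nr_ideal_def using normal_imp_subgroup by blast

lemma nr_ideal_subset: "nr_ideal R I \<Longrightarrow> I \<subseteq> carrier R"
  using subgroup.subset[OF nr_ideal_subgroup] by fastforce

lemma nr_ideal_zero: "nr_ideal R I \<Longrightarrow> \<zero>\<^bsub>R\<^esub> \<in> I"
  using subgroup.one_closed[OF nr_ideal_subgroup] by fastforce

lemma DirProd_fst_group_hom: "group A \<Longrightarrow> group B \<Longrightarrow> group_hom (A \<times>\<times> B) A fst"
  by (auto intro!: group_hom.intro group_hom_axioms.intro DirProd_group
      simp: hom_def mult_DirProd')

lemma DirProd_snd_group_hom: "group A \<Longrightarrow> group B \<Longrightarrow> group_hom (A \<times>\<times> B) B snd"
  by (auto intro!: group_hom.intro group_hom_axioms.intro DirProd_group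
      simp: hom_def mult_DirProd')

lemma DirProd_inl_group_hom:
  "group A \<Longrightarrow> group B \<Longrightarrow> group_hom A (A \<times>\<times> B) (\<lambda>x. (x, \<one>\<^bsub>B\<^esub>))"
  by (auto intro!: group_hom.intro group_hom_axioms.intro DirProd_group
      simp: hom_def group.is_monoid)

lemma DirProd_inr_group_hom:
  "group A \<Longrightarrow> group B \<Longrightarrow> group_hom B (A \<times>\<times> B) (\<lambda>y. (\<one>\<^bsub>A\<^esub>, y))"
  by (auto intro!: group_hom.intro group_hom_axioms.intro DirProd_group
      simp: hom_def group.is_monoid)

lemma generate_DirProd_Times:
  assumes A: "group A" and B: "group B" and S: "S \<subseteq> carrier A" and T: "T \<subseteq> carrier B"
  shows "generate (A \<times>\<times> B) (S \<times> {\<one>\<^bsub>B\<^esub>} \<union> {\<one>\<^bsub>A\<^esub>} \<times> T) = generate A S \<times> generate B T"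
    (is "generate _ ?U = _")
proof
  interpret A: group A by (rule A)
  interpret B: group B by (rule B)
  interpret AB: group "A \<times>\<times> B" by (rule DirProd_group[OF A B])
  show "generate (A \<times>\<times> B) ?U \<subseteq> generate A S \<times> generate B T"
  proof (rule AB.generate_subgroup_incl)
    show "?U \<subseteq> generate A S \<times> generate B T"
      by (auto intro: generate.incl generate.one)
    show "subgroup (generate A S \<times> generate B T) (A \<times>\<times> B)"
      by (rule DirProd_subgroups[OF A A.generate_is_subgroup[OF S] B B.generate_is_subgroup[OF T]])
  qed
  show "generate A S \<times> generate B T \<subseteq> generate (A \<times>\<times> B) ?U"
  proof clarify
    fix a b assume a: "a \<in> generate A S" and b: "b \<in> generate B T"
    interpret inl: group_hom A "A \<times>\<times> B" "\<lambda>x. (x, \<one>\<^bsub>B\<^esub>)"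
      by (rule DirProd_inl_group_hom[OF A B])
    interpret inr: group_hom B "A \<times>\<times> B" "\<lambda>y. (\<one>\<^bsub>A\<^esub>, y)"
      by (rule DirProd_inr_group_hom[OF A B])
    have "(\<lambda>x. (x, \<one>\<^bsub>B\<^esub>)) ` S = S \<times> {\<one>\<^bsub>B\<^esub>}" by auto
    then have "(a, \<one>\<^bsub>B\<^esub>) \<in> generate (A \<times>\<times> B) (S \<times> {\<one>\<^bsub>B\<^esub>})"
      using inl.generate_img[OF S] a by auto
    then have a1: "(a, \<one>\<^bsub>B\<^esub>) \<in> generate (A \<times>\<times> B) ?U"
      using AB.mono_generate[of "S \<times> {\<one>\<^bsub>B\<^esub>}" ?U] by blast
    have "(\<lambda>y. (\<one>\<^bsub>A\<^esub>, y)) ` T = {\<one>\<^bsub>A\<^esub>} \<times> T" by auto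
    then have "(\<one>\<^bsub>A\<^esub>, b) \<in> generate (A \<times>\<times> B) ({\<one>\<^bsub>A\<^esub>} \<times> T)"
      using inr.generate_img[OF T] b by auto
    then have b1: "(\<one>\<^bsub>A\<^esub>, b) \<in> generate (A \<times>\<times> B) ?U"
      using AB.mono_generate[of "{\<one>\<^bsub>A\<^esub>} \<times> T" ?U] by blast
    have "(a, b) = (a, \<one>\<^bsub>B\<^esub>) \<otimes>\<^bsub>A \<times>\<times> B\<^esub> (\<one>\<^bsub>A\<^esub>, b)"
      using A.generate_incl[OF S] B.generate_incl[OF T] a b by auto
    then show "(a, b) \<in> generate (A \<times>\<times> B) ?U"
      using generate.eng[OF a1 b1] by simp
  qed
qed

lemma ideal_prod_subgroup:
  assumes R: "near_ring R" and "I \<subseteq> carrier R" "J \<subseteq> carrier R"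
  shows "subgroup (ideal_prod R I J) (add_monoid R)"
proof -
  interpret A: group "add_monoid R" by (rule near_ring_add_group[OF R])
  show ?thesis
    unfolding ideal_prod_def
    using assms(2,3) by (intro A.generate_is_subgroup) (auto intro!: near_ring_mult_closed[OF R])
qed

lemma ideal_prod_subset:
  assumes "near_ring R" "I \<subseteq> carrier R" "J \<subseteq> carrier R"
  shows "ideal_prod R I J \<subseteq> carrier R"
  using subgroup.subset[OF ideal_prod_subgroup[OF assms]] by simp

lemma ideal_prod_mono:
  assumes "near_ring R" "I \<subseteq> I'" "J \<subseteq> J'"
  shows "ideal_prod R I J \<subseteq> ideal_prod R I' J'"
  unfolding ideal_prod_def
  using assms by (intro group.mono_generate near_ring_add_group) blast+

(* The zeros in the factors supply the generators (i j, 0) = (i, 0)(j, 0) and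
   (0, i' j') = (0, i')(0, j') of the right-hand side, as 0 \<cdot> 0 = 0. *)
lemma ideal_prod_RDirProd_Times:
  assumes N: "near_ring N" and M: "near_ring M"
    and I: "I \<subseteq> carrier N" "\<zero>\<^bsub>N\<^esub> \<in> I" and J: "J \<subseteq> carrier N" "\<zero>\<^bsub>N\<^esub> \<in> J"
    and I': "I' \<subseteq> carrier M" "\<zero>\<^bsub>M\<^esub> \<in> I'" and J': "J' \<subseteq> carrier M" "\<zero>\<^bsub>M\<^esub> \<in> J'"
  shows "ideal_prod (RDirProd N M) (I \<times> I') (J \<times> J') = ideal_prod N I J \<times> ideal_prod M I' J'"
proof -
  interpret AN: group "add_monoid N" by (rule near_ring_add_group[OF N])
  interpret AM: group "add_monoid M" by (rule near_ring_add_group[OF M])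
  interpret AP: group "add_monoid N \<times>\<times> add_monoid M" by (rule DirProd_group) unfold_locales
  let ?S = "{i \<otimes>\<^bsub>N\<^esub> j | i j. i \<in> I \<and> j \<in> J}"
  let ?T = "{i \<otimes>\<^bsub>M\<^esub> j | i j. i \<in> I' \<and> j \<in> J'}"
  let ?U = "{k \<otimes>\<^bsub>RDirProd N M\<^esub> l | k l. k \<in> I \<times> I' \<and> l \<in> J \<times> J'}"
  have S: "?S \<subseteq> carrier (add_monoid N)" and T: "?T \<subseteq> carrier (add_monoid M)"
    using I J I' J' by (auto intro!: near_ring_mult_closed[OF N] near_ring_mult_closed[OF M])
  have "generate (add_monoid N \<times>\<times> add_monoid M) ?U \<subseteq> generate (add_monoid N) ?S \<times> generate (add_monoid M) ?T"
  proof (rule AP.generate_subgroup_incl)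
    show "?U \<subseteq> generate (add_monoid N) ?S \<times> generate (add_monoid M) ?T"
      by (auto intro: generate.incl)
    show "subgroup (generate (add_monoid N) ?S \<times> generate (add_monoid M) ?T)
        (add_monoid N \<times>\<times> add_monoid M)"
      by (intro DirProd_subgroups AN.generate_is_subgroup AM.generate_is_subgroup
          AN.is_group AM.is_group S T)
  qed
  moreover have "?S \<times> {\<zero>\<^bsub>M\<^esub>} \<union> {\<zero>\<^bsub>N\<^esub>} \<times> ?T \<subseteq> ?U"
  proof -
    have zN: "\<zero>\<^bsub>N\<^esub> \<otimes>\<^bsub>N\<^esub> \<zero>\<^bsub>N\<^esub> = \<zero>\<^bsub>N\<^esub>" and zM: "\<zero>\<^bsub>M\<^esub> \<otimes>\<^bsub>M\<^esub> \<zero>\<^bsub>M\<^esub> = \<zero>\<^bsub>M\<^esub>"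
      using near_ring_zero_mult[OF N] near_ring_zero_mult[OF M] I J' by auto
    have "(i \<otimes>\<^bsub>N\<^esub> j, \<zero>\<^bsub>M\<^esub>) \<in> ?U" if "i \<in> I" "j \<in> J" for i j
      using that I'(2) J'(2) zM
      by (intro CollectI exI[of _ "(i, \<zero>\<^bsub>M\<^esub>)"] exI[of _ "(j, \<zero>\<^bsub>M\<^esub>)"]) simp
    moreover have "(\<zero>\<^bsub>N\<^esub>, i \<otimes>\<^bsub>M\<^esub> j) \<in> ?U" if "i \<in> I'" "j \<in> J'" for i j
      using that I(2) J(2) zN
      by (intro CollectI exI[of _ "(\<zero>\<^bsub>N\<^esub>, i)"] exI[of _ "(\<zero>\<^bsub>N\<^esub>, j)"]) simp
    ultimately show ?thesis by blast
  qed
  then have "generate (add_monoid N \<times>\<times> add_monoid M) (?S \<times> {\<zero>\<^bsub>M\<^esub>} \<union> {\<zero>\<^bsub>N\<^esub>} \<times> ?T)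
      \<subseteq> generate (add_monoid N \<times>\<times> add_monoid M) ?U"
    by (rule AP.mono_generate)
  then have "generate (add_monoid N) ?S \<times> generate (add_monoid M) ?T
      \<subseteq> generate (add_monoid N \<times>\<times> add_monoid M) ?U"
    using generate_DirProd_Times[OF AN.is_group AM.is_group S T] by simp
  ultimately show ?thesis
    unfolding ideal_prod_def RDirProd_add_monoid by (rule subset_antisym)
qed

lemma ideal_prod_Times_carrier:
  assumes N: "near_ring N" and M: "near_ring M" and I: "nr_ideal N I" and J: "nr_ideal N J"
  shows "ideal_prod (RDirProd N M) (I \<times> carrier M) (J \<times> carrier M)
    = ideal_prod N I J \<times> ideal_prod M (carrier M) (carrier M)"
  using nr_ideal_subset[OF I] nr_ideal_zero[OF I] nr_ideal_subset[OF J] nr_ideal_zero[OF J]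
    near_ring_zero_closed[OF M]
  by (intro ideal_prod_RDirProd_Times N M) auto

definition near_ring_hom :: "('a, 'm) ring_scheme \<Rightarrow> ('b, 'k) ring_scheme \<Rightarrow> ('a \<Rightarrow> 'b) \<Rightarrow> bool"
  where "near_ring_hom R S h \<longleftrightarrow>
    group_hom (add_monoid R) (add_monoid S) h \<and>
    (\<forall>x\<in>carrier R. \<forall>y\<in>carrier R. h (x \<otimes>\<^bsub>R\<^esub> y) = h x \<otimes>\<^bsub>S\<^esub> h y)"

lemma near_ring_hom_group_hom:
  "near_ring_hom R S h \<Longrightarrow> group_hom (add_monoid R) (add_monoid S) h"
  by (simp add: near_ring_hom_def)

lemma near_ring_hom_mult:
  "near_ring_hom R S h \<Longrightarrow> x \<in> carrier R \<Longrightarrow> y \<in> carrier R \<Longrightarrow> h (x \<otimes>\<^bsub>R\<^esub> y) = h x \<otimes>\<^bsub>S\<^esub> h y"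
  by (simp add: near_ring_hom_def)

lemma near_ring_hom_add:
  "near_ring_hom R S h \<Longrightarrow> x \<in> carrier R \<Longrightarrow> y \<in> carrier R \<Longrightarrow> h (x \<oplus>\<^bsub>R\<^esub> y) = h x \<oplus>\<^bsub>S\<^esub> h y"
  using group_hom.hom_mult[OF near_ring_hom_group_hom, of R S h x y] by simp

lemma near_ring_hom_fst:
  assumes "near_ring N" "near_ring M"
  shows "near_ring_hom (RDirProd N M) N fst"
  using DirProd_fst_group_hom[OF near_ring_add_group near_ring_add_group, OF assms]
  unfolding near_ring_hom_def RDirProd_add_monoid by auto

lemma near_ring_hom_snd:
  assumes "near_ring N" "near_ring M"
  shows "near_ring_hom (RDirProd N M) M snd"
  using DirProd_snd_group_hom[OF near_ring_add_group near_ring_add_group, OF assms]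
  unfolding near_ring_hom_def RDirProd_add_monoid by auto

lemma ideal_prod_image:
  assumes R: "near_ring R" and h: "near_ring_hom R S h"
    and I: "I \<subseteq> carrier R" and J: "J \<subseteq> carrier R"
  shows "h ` ideal_prod R I J = ideal_prod S (h ` I) (h ` J)"
proof -
  interpret h: group_hom "add_monoid R" "add_monoid S" h
    by (rule near_ring_hom_group_hom[OF h])
  have img: "h ` {i \<otimes>\<^bsub>R\<^esub> j | i j. i \<in> I \<and> j \<in> J}
      = {i \<otimes>\<^bsub>S\<^esub> j | i j. i \<in> h ` I \<and> j \<in> h ` J}"
  proof (intro equalityI subsetI)
    fix x assume "x \<in> h ` {i \<otimes>\<^bsub>R\<^esub> j | i j. i \<in> I \<and> j \<in> J}"
    then obtain i j where ij: "i \<in> I" "j \<in> J" and x: "x = h (i \<otimes>\<^bsub>R\<^esub> j)" by blast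
    have "x = h i \<otimes>\<^bsub>S\<^esub> h j"
      using ij I J unfolding x by (intro near_ring_hom_mult[OF h]) auto
    with ij show "x \<in> {i \<otimes>\<^bsub>S\<^esub> j | i j. i \<in> h ` I \<and> j \<in> h ` J}" by blast
  next
    fix x assume "x \<in> {i \<otimes>\<^bsub>S\<^esub> j | i j. i \<in> h ` I \<and> j \<in> h ` J}"
    then obtain i j where ij: "i \<in> I" "j \<in> J" and x: "x = h i \<otimes>\<^bsub>S\<^esub> h j" by blast
    have "x = h (i \<otimes>\<^bsub>R\<^esub> j)"
      using ij I J unfolding x by (intro near_ring_hom_mult[OF h, symmetric]) auto
    with ij show "x \<in> h ` {i \<otimes>\<^bsub>R\<^esub> j | i j. i \<in> I \<and> j \<in> J}" by blast
  qed
  have "{i \<otimes>\<^bsub>R\<^esub> j | i j. i \<in> I \<and> j \<in> J} \<subseteq> carrier (add_monoid R)"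
    using I J by (auto intro!: near_ring_mult_closed[OF R])
  from h.generate_img[OF this] show ?thesis
    unfolding ideal_prod_def img by simp
qed

lemma ideal_prod_RDirProd_subset:
  assumes N: "near_ring N" and M: "near_ring M"
    and K: "K \<subseteq> carrier (RDirProd N M)" and L: "L \<subseteq> carrier (RDirProd N M)"
  shows "ideal_prod (RDirProd N M) K L
    \<subseteq> ideal_prod N (fst ` K) (fst ` L) \<times> ideal_prod M (carrier M) (carrier M)"
proof
  have NM: "near_ring (RDirProd N M)" by (rule near_ring_RDirProd[OF N M])
  fix x assume x: "x \<in> ideal_prod (RDirProd N M) K L"
  have "fst x \<in> ideal_prod N (fst ` K) (fst ` L)"
    using x ideal_prod_image[OF NM near_ring_hom_fst[OF N M] K L] by blast
  moreover have "snd x \<in> ideal_prod M (snd ` K) (snd ` L)"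
    using x ideal_prod_image[OF NM near_ring_hom_snd[OF N M] K L] by blast
  moreover have "ideal_prod M (snd ` K) (snd ` L) \<subseteq> ideal_prod M (carrier M) (carrier M)"
    using K L by (intro ideal_prod_mono M) (auto simp: RDirProd_carrier)
  ultimately show "x \<in> ideal_prod N (fst ` K) (fst ` L) \<times> ideal_prod M (carrier M) (carrier M)"
    by (auto simp: mem_Times_iff)
qed

lemma nr_ideal_image:
  assumes R: "near_ring R" and h: "near_ring_hom R S h" and surj: "h ` carrier R = carrier S"
    and K: "nr_ideal R K"
  shows "nr_ideal S (h ` K)"
proof -
  interpret h: group_hom "add_monoid R" "add_monoid S" h
    by (rule near_ring_hom_group_hom[OF h])
  have Ksub: "K \<subseteq> carrier R" by (rule nr_ideal_subset[OF K])
  have "h ` K \<lhd> add_monoid S"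
    using normal.surj_hom_normal_subgroup[OF _ h.group_hom_axioms] K surj
    unfolding nr_ideal_def by simp
  moreover have "h i \<otimes>\<^bsub>S\<^esub> n \<in> h ` K" if i: "i \<in> K" and n: "n \<in> carrier S" for i n
  proof -
    obtain m where m: "m \<in> carrier R" "n = h m" using surj n by blast
    have "i \<otimes>\<^bsub>R\<^esub> m \<in> K" using K i m(1) unfolding nr_ideal_def by blast
    moreover have "h i \<otimes>\<^bsub>S\<^esub> n = h (i \<otimes>\<^bsub>R\<^esub> m)"
      using Ksub i m by (simp add: near_ring_hom_mult[OF h] subsetD)
    ultimately show ?thesis by blast
  qed
  moreover have "(n \<otimes>\<^bsub>S\<^esub> (n' \<oplus>\<^bsub>S\<^esub> h i)) \<oplus>\<^bsub>S\<^esub> inv\<^bsub>add_monoid S\<^esub> (n \<otimes>\<^bsub>S\<^esub> n') \<in> h ` K"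
    if n: "n \<in> carrier S" and n': "n' \<in> carrier S" and i: "i \<in> K" for n n' i
  proof -
    obtain a where a: "a \<in> carrier R" "n = h a" using surj n by blast
    obtain c where c: "c \<in> carrier R" "n' = h c" using surj n' by blast
    have i': "i \<in> carrier R" using Ksub i by blast
    have ci: "c \<oplus>\<^bsub>R\<^esub> i \<in> carrier R" using h.G.m_closed[of c i] c(1) i' by simp
    have ac: "a \<otimes>\<^bsub>R\<^esub> c \<in> carrier R" by (rule near_ring_mult_closed[OF R a(1) c(1)])
    have "inv\<^bsub>add_monoid R\<^esub> (a \<otimes>\<^bsub>R\<^esub> c) \<in> carrier R"
      using h.G.inv_closed[of "a \<otimes>\<^bsub>R\<^esub> c"] ac by simp
    then have "h ((a \<otimes>\<^bsub>R\<^esub> (c \<oplus>\<^bsub>R\<^esub> i)) \<oplus>\<^bsub>R\<^esub> inv\<^bsub>add_monoid R\<^esub> (a \<otimes>\<^bsub>R\<^esub> c))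
        = (n \<otimes>\<^bsub>S\<^esub> (n' \<oplus>\<^bsub>S\<^esub> h i)) \<oplus>\<^bsub>S\<^esub> inv\<^bsub>add_monoid S\<^esub> (n \<otimes>\<^bsub>S\<^esub> n')"
      using a c ci ac i' h.hom_inv[of "a \<otimes>\<^bsub>R\<^esub> c"]
      by (simp add: near_ring_hom_add[OF h] near_ring_hom_mult[OF h] near_ring_mult_closed[OF R])
    moreover have "(a \<otimes>\<^bsub>R\<^esub> (c \<oplus>\<^bsub>R\<^esub> i)) \<oplus>\<^bsub>R\<^esub> inv\<^bsub>add_monoid R\<^esub> (a \<otimes>\<^bsub>R\<^esub> c) \<in> K"
      using K a(1) c(1) i unfolding nr_ideal_def by blast
    ultimately show ?thesis by (metis image_eqI)
  qed
  ultimately show ?thesis unfolding nr_ideal_def by blast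
qed

lemma graded_ideal_image:
  assumes R: "near_ring R" and h: "near_ring_hom R S h" and surj: "h ` carrier R = carrier S"
    and grading: "\<And>s. s \<in> carrier G \<Longrightarrow> h ` Rs s \<subseteq> Ss s"
    and K: "graded_ideal G R Rs K"
  shows "graded_ideal G S Ss (h ` K)"
proof -
  interpret h: group_hom "add_monoid R" "add_monoid S" h
    by (rule near_ring_hom_group_hom[OF h])
  have nK: "nr_ideal R K" and gK: "generate (add_monoid R) (\<Union>s\<in>carrier G. K \<inter> Rs s) = K"
    using K by (simp_all add: graded_ideal_def)
  have hK: "nr_ideal S (h ` K)" by (rule nr_ideal_image[OF R h surj nK])
  have "(\<Union>s\<in>carrier G. K \<inter> Rs s) \<subseteq> carrier (add_monoid R)"
    using nr_ideal_subset[OF nK] by auto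
  then have "h ` K = generate (add_monoid S) (h ` (\<Union>s\<in>carrier G. K \<inter> Rs s))"
    using h.generate_img gK by simp
  also have "\<dots> \<subseteq> generate (add_monoid S) (\<Union>s\<in>carrier G. h ` K \<inter> Ss s)"
    using grading by (intro h.H.mono_generate) blast
  finally have "h ` K \<subseteq> generate (add_monoid S) (\<Union>s\<in>carrier G. h ` K \<inter> Ss s)" .
  moreover have "generate (add_monoid S) (\<Union>s\<in>carrier G. h ` K \<inter> Ss s) \<subseteq> h ` K"
    using nr_ideal_subgroup[OF hK] by (intro h.H.generate_subgroup_incl) blast+
  ultimately show ?thesis
    using hK unfolding graded_ideal_def by blast
qed

lemma graded_ideal_fst_image:
  assumes N: "near_ring N" and M: "near_ring M"
    and K: "graded_ideal G (RDirProd N M) (product_grading Ns Ms) K"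
  shows "graded_ideal G N Ns (fst ` K)"
proof (rule graded_ideal_image[OF near_ring_RDirProd[OF N M] near_ring_hom_fst[OF N M] _ _ K])
  have "\<zero>\<^bsub>M\<^esub> \<in> carrier M" by (rule near_ring_zero_closed[OF M])
  then show "fst ` carrier (RDirProd N M) = carrier N"
    by (force simp: RDirProd_carrier)
  show "fst ` product_grading Ns Ms s \<subseteq> Ns s" for s
    by (auto simp: product_grading_def)
qed

lemma nr_ideal_Times_carrier:
  assumes N: "near_ring N" and M: "near_ring M" and I: "nr_ideal N I"
  shows "nr_ideal (RDirProd N M) (I \<times> carrier M)"
proof -
  interpret AN: group "add_monoid N" by (rule near_ring_add_group[OF N])
  interpret AM: group "add_monoid M" by (rule near_ring_add_group[OF M])
  have "I \<times> carrier M \<lhd> add_monoid (RDirProd N M)"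
    unfolding RDirProd_add_monoid
    using AN.DirProd_normal[OF AM.is_group _ AM.normal_self] I by (simp add: nr_ideal_def)
  moreover have "x \<otimes>\<^bsub>RDirProd N M\<^esub> y \<in> I \<times> carrier M"
    if x: "x \<in> I \<times> carrier M" and y: "y \<in> carrier (RDirProd N M)" for x y
  proof -
    obtain i b where "x = (i, b)" "i \<in> I" "b \<in> carrier M" using x by blast
    moreover obtain c d where "y = (c, d)" "c \<in> carrier N" "d \<in> carrier M"
      using y by (auto simp: RDirProd_carrier)
    ultimately show ?thesis
      using I near_ring_mult_closed[OF M] unfolding nr_ideal_def by simp
  qed
  moreover have "(x \<otimes>\<^bsub>RDirProd N M\<^esub> (y \<oplus>\<^bsub>RDirProd N M\<^esub> z)) \<oplus>\<^bsub>RDirProd N M\<^esub>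
      inv\<^bsub>add_monoid (RDirProd N M)\<^esub> (x \<otimes>\<^bsub>RDirProd N M\<^esub> y) \<in> I \<times> carrier M"
    if x: "x \<in> carrier (RDirProd N M)" and y: "y \<in> carrier (RDirProd N M)"
      and z: "z \<in> I \<times> carrier M" for x y z
  proof -
    obtain a b where x: "x = (a, b)" "a \<in> carrier N" "b \<in> carrier M"
      using x by (auto simp: RDirProd_carrier)
    obtain c d where y: "y = (c, d)" "c \<in> carrier N" "d \<in> carrier M"
      using y by (auto simp: RDirProd_carrier)
    obtain e f where z: "z = (e, f)" "e \<in> I" "f \<in> carrier M"
      using z by blast
    have ac: "a \<otimes>\<^bsub>N\<^esub> c \<in> carrier N" and bd: "b \<otimes>\<^bsub>M\<^esub> d \<in> carrier M"
      using near_ring_mult_closed[OF N x(2) y(2)] near_ring_mult_closed[OF M x(3) y(3)] by blast+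
    have "b \<otimes>\<^bsub>M\<^esub> (d \<oplus>\<^bsub>M\<^esub> f) \<in> carrier M"
      using AM.m_closed[of d f] x y z near_ring_mult_closed[OF M] by simp
    then have "(b \<otimes>\<^bsub>M\<^esub> (d \<oplus>\<^bsub>M\<^esub> f)) \<oplus>\<^bsub>M\<^esub> inv\<^bsub>add_monoid M\<^esub> (b \<otimes>\<^bsub>M\<^esub> d) \<in> carrier M"
      using AM.m_closed[OF _ AM.inv_closed, of _ "b \<otimes>\<^bsub>M\<^esub> d"] bd by simp
    moreover have "(a \<otimes>\<^bsub>N\<^esub> (c \<oplus>\<^bsub>N\<^esub> e)) \<oplus>\<^bsub>N\<^esub> inv\<^bsub>add_monoid N\<^esub> (a \<otimes>\<^bsub>N\<^esub> c) \<in> I"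
      using I x y z unfolding nr_ideal_def by blast
    ultimately show ?thesis
      unfolding x(1) y(1) z(1) RDirProd_mult RDirProd_add RDirProd_add_inv[OF N M ac bd] by simp
  qed
  ultimately show ?thesis unfolding nr_ideal_def by blast
qed

lemma graded_ideal_Times_carrier:
  assumes N: "graded_near_ring G N Ns" and M: "graded_near_ring G M Ms"
    and I: "graded_ideal G N Ns I"
  shows "graded_ideal G (RDirProd N M) (product_grading Ns Ms) (I \<times> carrier M)"
proof -
  have nN: "near_ring N" and nM: "near_ring M"
    using N M by (simp_all add: graded_near_ring_near_ring)
  interpret AN: group "add_monoid N" by (rule near_ring_add_group[OF nN])
  interpret AM: group "add_monoid M" by (rule near_ring_add_group[OF nM])
  interpret AP: group "add_monoid N \<times>\<times> add_monoid M" by (rule DirProd_group) unfold_locales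
  have nI: "nr_ideal N I" and gI: "generate (add_monoid N) (\<Union>s\<in>carrier G. I \<inter> Ns s) = I"
    using I by (simp_all add: graded_ideal_def)
  have gM: "generate (add_monoid M) (\<Union>s\<in>carrier G. Ms s) = carrier M"
    using M by (simp add: graded_near_ring_def)
  have IM: "nr_ideal (RDirProd N M) (I \<times> carrier M)"
    by (rule nr_ideal_Times_carrier[OF nN nM nI])
  let ?S = "\<Union>s\<in>carrier G. I \<inter> Ns s"
  let ?T = "\<Union>s\<in>carrier G. Ms s"
  let ?U = "\<Union>s\<in>carrier G. (I \<times> carrier M) \<inter> product_grading Ns Ms s"
  have S: "?S \<subseteq> carrier (add_monoid N)" using nr_ideal_subset[OF nI] by auto
  have T: "?T \<subseteq> carrier (add_monoid M)"
    using subgroup.subset[OF graded_near_ring_component_subgroup[OF M]] by auto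
  have gen: "generate (add_monoid N \<times>\<times> add_monoid M) (?S \<times> {\<zero>\<^bsub>M\<^esub>} \<union> {\<zero>\<^bsub>N\<^esub>} \<times> ?T)
      = I \<times> carrier M"
    using generate_DirProd_Times[OF AN.is_group AM.is_group S T] gI gM by simp
  have "?S \<times> {\<zero>\<^bsub>M\<^esub>} \<union> {\<zero>\<^bsub>N\<^esub>} \<times> ?T \<subseteq> ?U"
    using nr_ideal_zero[OF nI] T
      subgroup.one_closed[OF graded_near_ring_component_subgroup[OF N]]
      subgroup.one_closed[OF graded_near_ring_component_subgroup[OF M]]
    by (auto simp: product_grading_def)
  then have "I \<times> carrier M \<subseteq> generate (add_monoid N \<times>\<times> add_monoid M) ?U"
    unfolding gen[symmetric] by (rule AP.mono_generate)
  moreover have "generate (add_monoid N \<times>\<times> add_monoid M) ?U \<subseteq> I \<times> carrier M"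
    using nr_ideal_subgroup[OF IM] unfolding RDirProd_add_monoid
    by (intro AP.generate_subgroup_incl) auto
  ultimately show ?thesis
    using IM unfolding graded_ideal_def RDirProd_add_monoid by blast
qed

lemma graded_almost_prime_Times_carrier:
  assumes N: "graded_near_ring G N Ns" and M: "graded_near_ring G M Ms"
    and P: "graded_almost_prime G N Ns P"
  shows "graded_almost_prime G (RDirProd N M) (product_grading Ns Ms) (P \<times> carrier M)"
  unfolding graded_almost_prime_def
proof (intro conjI allI impI)
  have nN: "near_ring N" and nM: "near_ring M"
    using N M by (simp_all add: graded_near_ring_near_ring)
  have PN: "graded_ideal G N Ns P" using P by (simp add: graded_almost_prime_def)
  then have nP: "nr_ideal N P" by (simp add: graded_ideal_def)
  note prime = P[unfolded graded_almost_prime_def, THEN conjunct2, rule_format]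
  show "graded_ideal G (RDirProd N M) (product_grading Ns Ms) (P \<times> carrier M)"
    by (rule graded_ideal_Times_carrier[OF N M PN])
  fix K L
  assume K: "graded_ideal G (RDirProd N M) (product_grading Ns Ms) K"
    and L: "graded_ideal G (RDirProd N M) (product_grading Ns Ms) L"
    and KL_P: "ideal_prod (RDirProd N M) K L \<subseteq> P \<times> carrier M"
    and KL_P2: "\<not> ideal_prod (RDirProd N M) K L
      \<subseteq> ideal_prod (RDirProd N M) (P \<times> carrier M) (P \<times> carrier M) \<inter> carrier (RDirProd N M)"
  have Ksub: "K \<subseteq> carrier (RDirProd N M)" and Lsub: "L \<subseteq> carrier (RDirProd N M)"
    using K L nr_ideal_subset unfolding graded_ideal_def by blast+
  have KL: "ideal_prod (RDirProd N M) K L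
      \<subseteq> ideal_prod N (fst ` K) (fst ` L) \<times> ideal_prod M (carrier M) (carrier M)"
    by (rule ideal_prod_RDirProd_subset[OF nN nM Ksub Lsub])
  have "fst ` ideal_prod (RDirProd N M) K L = ideal_prod N (fst ` K) (fst ` L)"
    by (rule ideal_prod_image[OF near_ring_RDirProd[OF nN nM] near_ring_hom_fst[OF nN nM] Ksub Lsub])
  with KL_P have "ideal_prod N (fst ` K) (fst ` L) \<subseteq> P"
    by force
  moreover have "\<not> ideal_prod N (fst ` K) (fst ` L) \<subseteq> ideal_prod N P P \<inter> carrier N"
  proof
    assume "ideal_prod N (fst ` K) (fst ` L) \<subseteq> ideal_prod N P P \<inter> carrier N"
    with KL have "ideal_prod (RDirProd N M) K L
        \<subseteq> (ideal_prod N P P \<times> ideal_prod M (carrier M) (carrier M)) \<inter> carrier (RDirProd N M)"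
      using ideal_prod_subset[OF nM, of "carrier M" "carrier M"]
      by (fastforce simp: RDirProd_carrier)
    with KL_P2 show False
      unfolding ideal_prod_Times_carrier[OF nN nM nP nP] by blast
  qed
  ultimately have "fst ` K \<subseteq> P \<or> fst ` L \<subseteq> P"
    by (intro prime graded_ideal_fst_image[OF nN nM K] graded_ideal_fst_image[OF nN nM L])
  moreover have "K \<subseteq> fst ` K \<times> carrier M" and "L \<subseteq> fst ` L \<times> carrier M"
    using Ksub Lsub by (force simp: RDirProd_carrier)+
  ultimately show "K \<subseteq> P \<times> carrier M \<or> L \<subseteq> P \<times> carrier M"
    by blast
qed

lemma graded_almost_prime_of_Times_carrier:
  assumes N: "graded_near_ring G N Ns" and M: "graded_near_ring G M Ms"
    and P: "graded_ideal G N Ns P"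
    and PM: "graded_almost_prime G (RDirProd N M) (product_grading Ns Ms) (P \<times> carrier M)"
  shows "graded_almost_prime G N Ns P"
  unfolding graded_almost_prime_def
proof (intro conjI allI impI)
  show "graded_ideal G N Ns P" by (rule P)
  have nN: "near_ring N" and nM: "near_ring M"
    using N M by (simp_all add: graded_near_ring_near_ring)
  have nP: "nr_ideal N P" using P by (simp add: graded_ideal_def)
  note prime = PM[unfolded graded_almost_prime_def, THEN conjunct2, rule_format]
  fix I J
  assume I: "graded_ideal G N Ns I" and J: "graded_ideal G N Ns J"
    and IJ_P: "ideal_prod N I J \<subseteq> P"
    and IJ_P2: "\<not> ideal_prod N I J \<subseteq> ideal_prod N P P \<inter> carrier N"
  have IJ_M: "ideal_prod (RDirProd N M) (I \<times> carrier M) (J \<times> carrier M)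
      = ideal_prod N I J \<times> ideal_prod M (carrier M) (carrier M)"
    using I J by (intro ideal_prod_Times_carrier nN nM) (simp_all add: graded_ideal_def)
  have "ideal_prod M (carrier M) (carrier M) \<subseteq> carrier M"
    by (rule ideal_prod_subset[OF nM]) auto
  with IJ_P have "ideal_prod (RDirProd N M) (I \<times> carrier M) (J \<times> carrier M) \<subseteq> P \<times> carrier M"
    unfolding IJ_M by blast
  moreover have "\<not> ideal_prod (RDirProd N M) (I \<times> carrier M) (J \<times> carrier M)
      \<subseteq> ideal_prod (RDirProd N M) (P \<times> carrier M) (P \<times> carrier M) \<inter> carrier (RDirProd N M)"
  proof
    assume "ideal_prod (RDirProd N M) (I \<times> carrier M) (J \<times> carrier M)
      \<subseteq> ideal_prod (RDirProd N M) (P \<times> carrier M) (P \<times> carrier M) \<inter> carrier (RDirProd N M)"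
    moreover have "\<zero>\<^bsub>M\<^esub> \<in> ideal_prod M (carrier M) (carrier M)"
      using subgroup.one_closed[OF ideal_prod_subgroup[OF nM]] by fastforce
    ultimately have "ideal_prod N I J \<subseteq> ideal_prod N P P \<inter> carrier N"
      unfolding IJ_M ideal_prod_Times_carrier[OF nN nM nP nP] by (auto simp: RDirProd_carrier)
    with IJ_P2 show False ..
  qed
  ultimately have "I \<times> carrier M \<subseteq> P \<times> carrier M \<or> J \<times> carrier M \<subseteq> P \<times> carrier M"
    by (intro prime graded_ideal_Times_carrier[OF N M I] graded_ideal_Times_carrier[OF N M J])
  then show "I \<subseteq> P \<or> J \<subseteq> P"
    using near_ring_zero_closed[OF nM] by (simp add: Times_subset_cancel2)
qed

theorem theorem17:
  fixes G :: "('g, 'n) monoid_scheme"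
    and N :: "('a, 'm) ring_scheme" and Ns :: "'g \<Rightarrow> 'a set"
    and M :: "('b, 'k) ring_scheme" and Ms :: "'g \<Rightarrow> 'b set"
    and P :: "'a set"
  assumes "monoid G"
    and "graded_near_ring G N Ns"
    and "graded_near_ring G M Ms"
    and "graded_ideal G N Ns P"
  shows "graded_almost_prime G N Ns P \<longleftrightarrow>
         graded_almost_prime G (RDirProd N M) (product_grading Ns Ms) (P \<times> carrier M)"
  using graded_almost_prime_Times_carrier[OF assms(2,3)]
    graded_almost_prime_of_Times_carrier[OF assms(2,3,4)]
  by blast

end
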